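(* Let $L_i,L_j$ be two of four general lines in $\mathbb P^2$, $P=L_i\cap L_j$, and let $f\colon Y\to\mathbb P^2$ be a composition of blowups at points of intersection of visible curves. Let $E,E'$ be two exceptional visible curves over $P$ with weights $(w_i,w_j)$ and $(w'_i,w'_j)$ (coefficients in $f^*L_i,f^*L_j$) such that $w_j/w_i<w'_j/w'_i$, and let $\Gamma$ be the chain of visible curves lying strictly between $E$ and $E'$ in the chain of visible curves over $P$, marked by $-C^2$. Then $$\det\Gamma=\begin{vmatrix}w_i&w_j\\ w'_i&w'_j\end{vmatrix}=\Big(\frac{w_i}{w_j}-\frac{w'_i}{w'_j}\Big)w_jw'_j.$$
   Context: Visible curves are the strict transforms of the lines and of all exceptional curves of the blowups; each blowup in $f$ is centered at an intersection point of two visible curves. The visible curves over $P$ together with the strict transforms of $L_i,L_j$ form a chain. The determinant of a chain with marks $a_1,\dots,a_k$ is the determinant of the tridiagonal matrix with diagonal $a_l$ and off-diagonal entries $-1$; the empty chain has determinant $1$. *)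

theory Defs
  imports Complex_Main "Jordan_Normal_Form.Determinant"
begin

text \<open>A curve in the chain is recorded as a triple (w_i, w_j, a): its weights, i.e. its
  coefficients in f^*L_i and f^*L_j, and its mark a = -C^2.  The chain is listed from
  the strict transform of L_i to the strict transform of L_j.\<close>

type_synonym vcurve = "nat \<times> nat \<times> int"

definition wi :: "vcurve \<Rightarrow> nat" where "wi c = fst c"
definition wj :: "vcurve \<Rightarrow> nat" where "wj c = fst (snd c)"
definition mark :: "vcurve \<Rightarrow> int" where "mark c = snd (snd c)"

text \<open>Chains over P obtainable from a composition of blowups at intersection points of
  visible curves.  Initially the chain is L_i, L_j (self-intersection 1, mark -1).
  A blowup at the intersection point of two adjacent curves of the chain inserts a
  (-1)-curve whose weights are the sums and lowers the self-intersections of the two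
  neighbours by one.  A blowup at a point of L_i (resp. L_j) not lying over P only
  lowers the self-intersection of that end curve; all other blowups do not touch the
  chain over P.\<close>

inductive chain_over_P :: "vcurve list \<Rightarrow> bool" where
  init: "chain_over_P [(1, 0, -1), (0, 1, -1)]"
| blowup: "chain_over_P (xs @ [(a, b, m), (c, d, n)] @ ys) \<Longrightarrow>
     chain_over_P (xs @ [(a, b, m + 1), (a + c, b + d, 1), (c, d, n + 1)] @ ys)"
| blowup_Li: "chain_over_P ((a, b, m) # xs) \<Longrightarrow> chain_over_P ((a, b, m + 1) # xs)"
| blowup_Lj: "chain_over_P (xs @ [(a, b, m)]) \<Longrightarrow> chain_over_P (xs @ [(a, b, m + 1)])"

definition chain_matrix :: "int list \<Rightarrow> int mat" where
  "chain_matrix as = mat (length as) (length as)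
     (\<lambda>(p, q). if p = q then as ! p else if p = q + 1 \<or> q = p + 1 then -1 else 0)"

definition chain_det :: "vcurve list \<Rightarrow> int" where
  "chain_det cs = det (chain_matrix (map mark cs))"

definition strictly_between :: "vcurve list \<Rightarrow> nat \<Rightarrow> nat \<Rightarrow> vcurve list" where
  "strictly_between cs k l = nths cs {min k l <..< max k l}"

end

theory Submission
  imports Defs
begin

text \<open>Along the chain over P the weight vectors w_p = (w_i, w_j) satisfy
  det(w_p, w_(p+1)) = 1, and every interior curve with mark a_p satisfies
  w_(p-1) + w_(p+1) = a_p w_p; both relations survive each blowup.  The second relation
  gives det(w_k, w_l) = a_(k+1) det(w_(k+1), w_l) - det(w_(k+2), w_l), which is the
  expansion of the tridiagonal determinant of the curves strictly between k and l along its
  first row; the initial values agree by the first relation.  Positivity of consecutive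
  determinants also orders the curves by the slope w_j / w_i, so the hypothesis on the slopes
  says that E comes before E'.\<close>

lemma chain_matrix_carrier: "chain_matrix as \<in> carrier_mat (length as) (length as)"
  by (simp add: chain_matrix_def)

lemma chain_matrix_index:
  "p < length as \<Longrightarrow> q < length as \<Longrightarrow> chain_matrix as $$ (p, q) =
     (if p = q then as ! p else if p = q + 1 \<or> q = p + 1 then -1 else 0)"
  by (simp add: chain_matrix_def)

lemma det_chain_matrix_Nil: "det (chain_matrix []) = 1"
  using chain_matrix_carrier[of "[]"] by simp

lemma det_chain_matrix_single: "det (chain_matrix [a]) = a"
  using chain_matrix_carrier[of "[a]"] by (simp add: det_single chain_matrix_index)

lemma det_chain_matrix_minor:
  "det (mat_delete (chain_matrix (a # b # r)) 0 1) = - det (chain_matrix r)"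
proof -
  let ?N = "mat_delete (chain_matrix (a # b # r)) 0 1"
  have N: "?N \<in> carrier_mat (Suc (length r)) (Suc (length r))"
    by (simp add: mat_delete_def chain_matrix_def)
  have minor: "mat_delete ?N 0 0 = chain_matrix r"
    by (rule eq_matI) (auto simp: mat_delete_def chain_matrix_def)
  have "det ?N = (\<Sum>i<Suc (length r). ?N $$ (i, 0) * cofactor ?N i 0)"
    by (rule laplace_expansion_column[OF N]) simp
  also have "\<dots> = ?N $$ (0, 0) * cofactor ?N 0 0"
    by (simp add: sum.lessThan_Suc_shift mat_delete_def chain_matrix_def del: sum.lessThan_Suc)
  also have "\<dots> = - det (chain_matrix r)"
    using minor by (simp add: mat_delete_def chain_matrix_def cofactor_def)
  finally show ?thesis .
qed

lemma det_chain_matrix_Cons_Cons: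
  "det (chain_matrix (a # b # r)) = a * det (chain_matrix (b # r)) - det (chain_matrix r)"
proof -
  let ?M = "chain_matrix (a # b # r)"
  have M: "?M \<in> carrier_mat (Suc (Suc (length r))) (Suc (Suc (length r)))"
    using chain_matrix_carrier[of "a # b # r"] by simp
  have minor: "mat_delete ?M 0 0 = chain_matrix (b # r)"
    by (rule eq_matI) (auto simp: mat_delete_def chain_matrix_def)
  have "det ?M = (\<Sum>j<Suc (Suc (length r)). ?M $$ (0, j) * cofactor ?M 0 j)"
    by (rule laplace_expansion_row[OF M]) simp
  also have "\<dots> = ?M $$ (0, 0) * cofactor ?M 0 0 + ?M $$ (0, 1) * cofactor ?M 0 1"
    by (simp add: sum.lessThan_Suc_shift chain_matrix_index del: sum.lessThan_Suc)
  also have "\<dots> = a * det (chain_matrix (b # r)) - det (chain_matrix r)"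
    using minor det_chain_matrix_minor[of a b r] by (simp add: chain_matrix_index cofactor_def)
  finally show ?thesis .
qed

definition weight_det :: "vcurve \<Rightarrow> vcurve \<Rightarrow> int" where
  "weight_det c d = int (wi c) * int (wj d) - int (wj c) * int (wi d)"

lemma weight_det_swap: "weight_det d c = - weight_det c d"
  by (simp add: weight_det_def)

lemma weight_det_posD:
  assumes "0 < weight_det c d"
  shows "0 < wi c" "0 < wj d"
  using assms by (auto simp: weight_det_def mult_less_0_iff intro!: Nat.gr0I)

lemma weight_det_pos_trans:
  assumes ab: "0 < weight_det a b" and bc: "0 < weight_det b c"
  shows "0 < weight_det a c"
proof -
  \<comment> \<open>Cramer's identity det(a,c) b = det(a,b) c + det(b,c) a, summed over both coordinates\<close>
  have "weight_det a c * int (wi b + wj b)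
      = weight_det a b * int (wi c + wj c) + weight_det b c * int (wi a + wj a)"
    by (simp add: weight_det_def algebra_simps)
  also have "\<dots> > 0"
    using ab bc weight_det_posD[OF ab] weight_det_posD[OF bc]
    by (simp add: add_pos_pos)
  finally show ?thesis
    by (simp add: zero_less_mult_iff)
qed

lemma sorted_wrt_weight_det_pos:
  assumes "successively (\<lambda>c d. weight_det c d = 1) cs"
  shows "sorted_wrt (\<lambda>c d. 0 < weight_det c d) cs"
proof -
  have "successively (\<lambda>c d. 0 < weight_det c d) cs"
    using assms by (rule successively_mono) simp
  moreover have "transp (\<lambda>c d. 0 < weight_det c d)"
    by (rule transpI) (rule weight_det_pos_trans)
  ultimately show ?thesis
    by (simp add: successively_conv_sorted_wrt)
qed

definition toric_relation :: "vcurve \<Rightarrow> vcurve \<Rightarrow> vcurve \<Rightarrow> bool" where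
  "toric_relation b c d \<longleftrightarrow>
     mark c * int (wi c) = int (wi b) + int (wi d) \<and> mark c * int (wj c) = int (wj b) + int (wj d)"

lemma toric_relation_weight_det:
  assumes "toric_relation b c d"
  shows "weight_det b e = mark c * weight_det c e - weight_det d e"
proof -
  have "weight_det b e + weight_det d e
      = (int (wi b) + int (wi d)) * int (wj e) - (int (wj b) + int (wj d)) * int (wi e)"
    by (simp add: weight_det_def algebra_simps)
  also have "\<dots> = mark c * int (wi c) * int (wj e) - mark c * int (wj c) * int (wi e)"
    using assms by (simp add: toric_relation_def)
  also have "\<dots> = mark c * weight_det c e"
    by (simp add: weight_det_def algebra_simps)
  finally show ?thesis by simp
qed

fun toric_relations :: "vcurve list \<Rightarrow> bool" where
  "toric_relations (b # c # d # cs) \<longleftrightarrow> toric_relation b c d \<and> toric_relations (c # d # cs)"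
| "toric_relations _ \<longleftrightarrow> True"

definition toric_chain :: "vcurve list \<Rightarrow> bool" where
  "toric_chain cs \<longleftrightarrow> successively (\<lambda>c d. weight_det c d = 1) cs \<and> toric_relations cs"

lemma toric_relations_Cons_cong:
  assumes "wi x = wi y" "wj x = wj y"
  shows "toric_relations (x # xs) = toric_relations (y # xs)"
  using assms by (induction xs rule: induct_list012) (auto simp: toric_relation_def)

lemma toric_relations_snoc_cong:
  assumes "wi x = wi y" "wj x = wj y"
  shows "toric_relations (xs @ [x]) = toric_relations (xs @ [y])"
proof (induction xs rule: induct_list012)
  case (3 u v zs)
  then show ?case
    using assms by (cases zs) (auto simp: toric_relation_def)
qed (use assms in \<open>auto simp: toric_relation_def\<close>)

lemma toric_relations_blowup:
  assumes "toric_relations (xs @ [(a, b, m), (c, d, n)] @ ys)"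
  shows "toric_relations (xs @ [(a, b, m + 1), (a + c, b + d, 1), (c, d, n + 1)] @ ys)"
proof -
  have tail: "toric_relations ((c, d, n) # ys) = toric_relations ((c, d, n + 1) # ys)"
    by (rule toric_relations_Cons_cong) (simp_all add: wi_def wj_def)
  from assms show ?thesis
  proof (induction xs rule: induct_list012)
    case 1
    with tail show ?case
      by (cases ys) (auto simp: toric_relation_def wi_def wj_def mark_def algebra_simps)
  next
    case (2 x)
    with tail show ?case
      by (cases ys) (auto simp: toric_relation_def wi_def wj_def mark_def algebra_simps)
  next
    case (3 x y zs)
    then show ?case
      by (cases zs) (auto simp: toric_relation_def wi_def wj_def mark_def)
  qed
qed

lemma toric_chain_over_P: "chain_over_P cs \<Longrightarrow> toric_chain cs"
proof (induction rule: chain_over_P.induct)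
  case init
  show ?case
    by (simp add: toric_chain_def weight_det_def wi_def wj_def)
next
  case (blowup xs a b m c d n ys)
  then have "toric_relations (xs @ [(a, b, m + 1), (a + c, b + d, 1), (c, d, n + 1)] @ ys)"
    using toric_relations_blowup by (simp only: toric_chain_def)
  with blowup show ?case
    by (auto simp: toric_chain_def successively_append_iff
        successively_Cons weight_det_def wi_def wj_def algebra_simps)
next
  case (blowup_Li a b m xs)
  then show ?case
    by (auto simp: toric_chain_def successively_Cons weight_det_def wi_def wj_def
        toric_relations_Cons_cong[of "(a, b, m)" "(a, b, m + 1)"])
next
  case (blowup_Lj xs a b m)
  then show ?case
    by (auto simp: toric_chain_def successively_append_iff weight_det_def wi_def wj_def
        toric_relations_snoc_cong[of "(a, b, m)" "(a, b, m + 1)" xs])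
qed

lemma toric_relations_ConsD: "toric_relations (x # xs) \<Longrightarrow> toric_relations xs"
  by (cases xs rule: toric_relations.cases) auto

lemma toric_relations_appendD:
  "toric_relations (xs @ ys) \<Longrightarrow> toric_relations xs \<and> toric_relations ys"
proof (induction xs rule: induct_list012)
  case (2 x)
  then show ?case
    by (simp add: toric_relations_ConsD)
next
  case (3 x y zs)
  then show ?case
    by (cases zs) (auto dest: toric_relations_ConsD)
qed simp

lemma toric_chain_appendD:
  "toric_chain (xs @ ys) \<Longrightarrow> toric_chain xs \<and> toric_chain ys"
  using toric_relations_appendD[of xs ys] by (simp add: toric_chain_def successively_append_iff)

lemma chain_det_toric_chain:
  "toric_chain (c # cs @ [d]) \<Longrightarrow> chain_det cs = weight_det c d"
proof (induction cs arbitrary: c rule: induct_list012)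
  case 1
  then show ?case
    by (simp add: toric_chain_def chain_det_def det_chain_matrix_Nil)
next
  case (2 x)
  then have "toric_relation c x d" "weight_det x d = 1"
    by (simp_all add: toric_chain_def)
  then have "weight_det c d = mark x * 1 - weight_det d d"
    using toric_relation_weight_det by metis
  then show ?case
    by (simp add: chain_det_def det_chain_matrix_single weight_det_def)
next
  case (3 x y zs)
  have tail: "toric_chain (x # y # zs @ [d])" "toric_chain (y # zs @ [d])"
    using "3.prems" toric_chain_appendD[of "[c]" "x # y # zs @ [d]"]
      toric_chain_appendD[of "[c, x]" "y # zs @ [d]"] by simp_all
  have "toric_relation c x y"
    using "3.prems" by (simp add: toric_chain_def)
  then have "weight_det c d = mark x * weight_det x d - weight_det y d"
    by (rule toric_relation_weight_det)
  also have "\<dots> = mark x * chain_det (y # zs) - chain_det zs"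
    using "3.IH" tail by simp
  also have "\<dots> = chain_det (x # y # zs)"
    by (simp add: chain_det_def det_chain_matrix_Cons_Cons)
  finally show ?case by simp
qed

lemma nths_greaterThanLessThan:
  "k < l \<Longrightarrow> nths xs {k<..<l} = drop (Suc k) (take l xs)"
proof (induction xs arbitrary: k l)
  case (Cons x xs)
  then obtain l' where l: "l = Suc l'"
    by (cases l) auto
  show ?case
  proof (cases k)
    case 0
    have "{j. Suc j \<in> {k<..<l}} = {..<l'}"
      using 0 l by auto
    then show ?thesis
      using 0 l by (simp add: nths_Cons)
  next
    case (Suc k')
    have "{j. Suc j \<in> {k<..<l}} = {k'<..<l'}"
      using Suc l by auto
    then show ?thesis
      using Suc l Cons by (simp add: nths_Cons)
  qed
qed simp

lemma drop_take_Suc_conv: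
  assumes "k < l" "l < length xs"
  shows "drop k (take (Suc l) xs) = xs ! k # drop (Suc k) (take l xs) @ [xs ! l]"
proof -
  have "take (Suc l) xs = take l xs @ [xs ! l]"
    using assms(2) by (rule take_Suc_conv_app_nth)
  moreover have "drop k (take l xs) = xs ! k # drop (Suc k) (take l xs)"
    using Cons_nth_drop_Suc[of k "take l xs"] assms by simp
  ultimately show ?thesis
    using assms by simp
qed

lemma chain_det_strictly_between:
  assumes "toric_chain cs" "k < l" "l < length cs"
  shows "chain_det (strictly_between cs k l) = weight_det (cs ! k) (cs ! l)"
proof (rule chain_det_toric_chain)
  have "toric_chain (drop k (take (Suc l) cs))"
    using assms(1) toric_chain_appendD by (metis append_take_drop_id)
  then show "toric_chain (cs ! k # strictly_between cs k l @ [cs ! l])"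
    using assms by (simp add: strictly_between_def nths_greaterThanLessThan drop_take_Suc_conv)
qed

lemma weight_det_nth_pos:
  assumes "successively (\<lambda>c d. weight_det c d = 1) cs" "i < j" "j < length cs"
  shows "0 < weight_det (cs ! i) (cs ! j)"
  using sorted_wrt_weight_det_pos[OF assms(1)] assms(2,3) by (rule sorted_wrt_nth_less)

lemma wi_wj_nth_pos:
  assumes "successively (\<lambda>c d. weight_det c d = 1) cs" "0 < p" "Suc p < length cs"
  shows "0 < wi (cs ! p)" "0 < wj (cs ! p)"
proof -
  have "weight_det (cs ! p) (cs ! Suc p) = 1"
    using assms(1,3) by (rule successively_nth)
  then show "0 < wi (cs ! p)"
    using weight_det_posD(1)[of "cs ! p" "cs ! Suc p"] by simp
  have "weight_det (cs ! (p - 1)) (cs ! p) = 1"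
    using successively_nth[OF assms(1), of "p - 1"] assms(2,3) by simp
  then show "0 < wj (cs ! p)"
    using weight_det_posD(2)[of "cs ! (p - 1)" "cs ! p"] by simp
qed

lemma weight_det_pos_if_slope_less:
  assumes "0 < wi c" "0 < wi d" "real (wj c) / real (wi c) < real (wj d) / real (wi d)"
  shows "0 < weight_det c d"
proof -
  have "real (wj c * wi d) < real (wi c * wj d)"
    using assms by (simp add: field_simps)
  then have "wj c * wi d < wi c * wj d"
    by (simp only: of_nat_less_iff)
  then show ?thesis
    by (simp add: weight_det_def flip: of_nat_mult)
qed

lemma less_if_weight_det_nth_pos:
  assumes "successively (\<lambda>c d. weight_det c d = 1) cs" "k < length cs"
    and "0 < weight_det (cs ! k) (cs ! l)"
  shows "k < l"
proof (rule ccontr)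
  assume "\<not> k < l"
  then consider "k = l" | "l < k" by linarith
  then show False
  proof cases
    case 1
    then show False
      using assms(3) by (simp add: weight_det_def)
  next
    case 2
    then have "0 < weight_det (cs ! l) (cs ! k)"
      using weight_det_nth_pos[OF assms(1)] assms(2) by simp
    then show False
      using assms(3) weight_det_swap[of "cs ! k" "cs ! l"] by simp
  qed
qed

theorem lemma3p11:
  fixes cs :: "vcurve list" and k l :: nat
  assumes "chain_over_P cs"
    and "0 < k" and "k < length cs - 1"
    and "0 < l" and "l < length cs - 1"
    and "real (wj (cs ! k)) / real (wi (cs ! k)) < real (wj (cs ! l)) / real (wi (cs ! l))"
  shows "chain_det (strictly_between cs k l)
           = int (wi (cs ! k)) * int (wj (cs ! l)) - int (wj (cs ! k)) * int (wi (cs ! l))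
       \<and> real_of_int (int (wi (cs ! k)) * int (wj (cs ! l)) - int (wj (cs ! k)) * int (wi (cs ! l)))
           = (real (wi (cs ! k)) / real (wj (cs ! k)) - real (wi (cs ! l)) / real (wj (cs ! l)))
             * real (wj (cs ! k)) * real (wj (cs ! l))"
proof -
  have chain: "toric_chain cs"
    using assms(1) by (rule toric_chain_over_P)
  then have unimodular: "successively (\<lambda>c d. weight_det c d = 1) cs"
    by (simp add: toric_chain_def)
  have pos: "0 < wi (cs ! k)" "0 < wj (cs ! k)" "0 < wi (cs ! l)" "0 < wj (cs ! l)"
    using wi_wj_nth_pos[OF unimodular] assms(2-5) by simp_all
  have "0 < weight_det (cs ! k) (cs ! l)"
    using pos assms(6) by (simp add: weight_det_pos_if_slope_less)
  then have "k < l"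
    using less_if_weight_det_nth_pos[OF unimodular] assms(3) by simp
  then have "chain_det (strictly_between cs k l) = weight_det (cs ! k) (cs ! l)"
    using chain assms(5) by (simp add: chain_det_strictly_between)
  then show ?thesis
    using pos by (simp add: weight_det_def field_simps)
qed

end
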